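(* Let either $1<d\leq2$ and $0<\beta\leq\frac{d-1}2$, or $d>2$ and $\frac{d-2}2\leq\beta\leq\frac{d-1}2$, and let $\theta=\frac{d-2\beta}2$. Then for all $u\in H^1(\mathbb{R}_+,(1+t)^{d-1})$ \[ \sup_{t\geq0}|u(t)|^2(1+t)^{2\beta}\leq K\left(\int_0^\infty|u'|^2(1+t)^{d-1}dt\right)^\theta\left(\int_0^\infty|u|^2(1+t)^{d-1}dt\right)^{1-\theta} \] with \[ K=\left(\frac2{d-2\beta}\right)^{d-2\beta}\left(\frac{d-1-2\beta}{2\beta}\right)^{d-1-2\beta}, \] using the convention $0^0=1$ (so $K=2$ when $\beta=\frac{d-1}2$).
   Context: $H^1(\mathbb{R}_+,(1+t)^{d-1})$ is the space of $u\in H^1_{\mathrm{loc}}(\mathbb{R}_+)$ with $\int_0^\infty(|u'|^2+|u|^2)(1+t)^{d-1}dt<\infty$. *)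

theory Defs
  imports "HOL-Analysis.Analysis"
begin

text \<open>Real power with the convention 0^0 = 1 (Isabelle's powr has 0 powr 0 = 0).\<close>
definition powr0 :: "real \<Rightarrow> real \<Rightarrow> real" where
  "powr0 x y = (if y = 0 then 1 else x powr y)"

end

theory Submission
  imports Defs
begin

text \<open>
  With \<open>g(t) = (1+t)^(2\<beta>)\<close> and \<open>w(t) = (1+t)^(d-1)\<close>, the inequality
  \<open>2|u||u'|g \<le> \<epsilon>|u'|\<^sup>2w + |u|\<^sup>2g\<^sup>2/(\<epsilon>w)\<close> shows that \<open>|u|\<^sup>2g\<close> decreases at most at rate
  \<open>\<epsilon>|u'|\<^sup>2w + \<mu>|u|\<^sup>2w\<close> whenever \<open>g\<^sup>2 \<le> \<epsilon>w(\<mu>w + g')\<close>. Since \<open>|u|\<^sup>2g \<le> |u|\<^sup>2w\<close> is integrable,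
  it is small far out, and integrating from \<open>t\<close> outwards gives
  \<open>|u(t)|\<^sup>2g(t) \<le> \<epsilon>A + \<mu>B\<close>, where \<open>A\<close>, \<open>B\<close> are the two weighted integrals. By weighted
  AM-GM the condition on the weights holds for \<open>\<epsilon> = \<theta>K\<rho>^(\<theta>-1)\<close>, \<open>\<mu> = (1-\<theta>)K\<rho>^\<theta>\<close> and every
  scale \<open>\<rho> > 0\<close>, \<open>K\<close> being the least constant for which it does; the choice \<open>\<rho> = A/B\<close>
  then yields \<open>K A^\<theta> B^(1-\<theta>)\<close>.
\<close>

section \<open>Primitives and local-to-global estimates\<close>

lemma has_integral_primitive_subinterval:
  fixes u u' :: "real \<Rightarrow> 'a::banach"
  assumes prim: "\<And>t. a \<le> t \<Longrightarrow> (u' has_integral (u t - u a)) {a..t}"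
    and ax: "a \<le> x" and xy: "x \<le> y"
  shows "(u' has_integral (u y - u x)) {x..y}"
proof -
  have "u' integrable_on {a..y}" using prim[of y] ax xy by auto
  then have "u' integrable_on {x..y}"
    by (rule integrable_subinterval_real) (use ax in auto)
  then obtain I where I: "(u' has_integral I) {x..y}" by blast
  have "(u' has_integral (u x - u a) + I) {a..y}"
    using has_integral_combine[OF ax xy prim[OF ax] I] .
  moreover have "(u' has_integral (u y - u a)) {a..y}" using prim ax xy by simp
  ultimately have "(u x - u a) + I = u y - u a" by (rule has_integral_unique)
  then have "I = u y - u x" by (simp add: algebra_simps eq_diff_eq)
  then show ?thesis using I by simp
qed

lemma continuous_on_primitive:
  fixes u u' :: "real \<Rightarrow> 'a::banach"
  assumes prim: "\<And>t. a \<le> t \<Longrightarrow> (u' has_integral (u t - u a)) {a..t}"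
  shows "continuous_on {a..b} u"
proof (cases "a \<le> b")
  case True
  have "continuous_on {a..b} (\<lambda>s. u a + integral {a..s} u')"
    using prim[OF True] by (intro continuous_on_add continuous_on_const indefinite_integral_continuous_1) blast
  moreover have "u a + integral {a..s} u' = u s" if "s \<in> {a..b}" for s
    using prim[of s] that by (simp add: integral_unique)
  ultimately show ?thesis by (rule continuous_on_eq)
next
  case False
  then show ?thesis by simp
qed

lemma integrable_nonneg_exists_small_value:
  fixes f :: "real \<Rightarrow> real"
  assumes f: "f integrable_on {a..}" and nonneg: "\<And>s. a \<le> s \<Longrightarrow> 0 \<le> f s"
    and "a \<le> t" "\<eta> > 0"
  shows "\<exists>T\<ge>t. f T < \<eta>"
proof (rule ccontr)
  assume "\<not> ?thesis"
  then have big: "\<And>T. t \<le> T \<Longrightarrow> \<eta> \<le> f T" by (auto simp: not_less)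
  obtain n :: nat where n: "integral {a..} f / \<eta> < real n" using reals_Archimedean2 by blast
  have sub: "f integrable_on {t..t + real n}"
    using integrable_on_subcbox[OF f, of t "t + real n"] \<open>a \<le> t\<close> by auto
  have "\<eta> * real n \<le> integral {t..t + real n} f"
    using integral_le[OF integrable_const_ivl sub, of \<eta>] big by (auto simp: mult.commute)
  also have "\<dots> \<le> integral {a..} f"
    using sub f nonneg \<open>a \<le> t\<close> by (intro integral_subset_le) auto
  finally have "\<eta> * real n \<le> integral {a..} f" .
  moreover have "integral {a..} f < \<eta> * real n"
    using n \<open>\<eta> > 0\<close> by (simp add: pos_divide_less_eq mult.commute)
  ultimately show False by linarith
qed

lemma increment_le_of_local_increment_le:
  fixes F M :: "real \<Rightarrow> real"
  assumes ab: "a \<le> b"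
    and local: "\<And>e. e > 0 \<Longrightarrow> \<exists>\<delta>>0. \<forall>x y. a \<le> x \<longrightarrow> x \<le> y \<longrightarrow> y \<le> b \<longrightarrow> y - x < \<delta>
                 \<longrightarrow> F x - F y \<le> M y - M x + e * (y - x)"
  shows "F a - F b \<le> M b - M a"
proof (rule field_le_epsilon)
  fix e :: real assume e: "e > 0"
  define e' where "e' = e / (b - a + 1)"
  have e': "e' > 0" using e ab by (simp add: e'_def)
  obtain \<delta> where \<delta>: "\<delta> > 0" and L: "\<And>x y. a \<le> x \<Longrightarrow> x \<le> y \<Longrightarrow> y \<le> b \<Longrightarrow> y - x < \<delta>
                 \<Longrightarrow> F x - F y \<le> M y - M x + e' * (y - x)"
    using local[OF e'] by blast
  obtain n :: nat where n: "(b - a) / \<delta> < real n" using reals_Archimedean2 by blast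
  have n0: "real n > 0" using n ab \<delta> by (smt (verit) divide_nonneg_pos)
  have h: "(b - a) / real n < \<delta>"
    using n n0 \<delta> by (simp add: divide_less_eq mult.commute pos_divide_less_eq)
  define x where "x i = a + real i * ((b - a) / real n)" for i :: nat
  have gap: "x (Suc i) - x i = (b - a) / real n" for i
    by (simp add: x_def distrib_right add_divide_distrib)
  have step: "F (x i) - F (x (Suc i)) \<le> M (x (Suc i)) - M (x i) + e' * ((b - a) / real n)"
    if "i < n" for i
  proof -
    have "real (Suc i) * ((b - a) / real n) \<le> real n * ((b - a) / real n)"
      using that ab n0 by (intro mult_right_mono) auto
    then have "x (Suc i) \<le> b" using n0 by (simp add: x_def)
    moreover have "a \<le> x i" using ab n0 by (simp add: x_def)
    moreover have "x i \<le> x (Suc i)"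
      using gap[of i] divide_nonneg_nonneg[of "b - a" "real n"] ab by linarith
    ultimately show ?thesis using L[of "x i" "x (Suc i)"] gap[of i] h by simp
  qed
  have "F (x 0) - F (x n) = (\<Sum>i<n. F (x i) - F (x (Suc i)))"
    by (rule sum_lessThan_telescope'[symmetric])
  also have "\<dots> \<le> (\<Sum>i<n. M (x (Suc i)) - M (x i) + e' * ((b - a) / real n))"
    using step by (intro sum_mono) auto
  also have "\<dots> = M (x n) - M (x 0) + e' * (b - a)"
    using n0 sum_lessThan_telescope[of "\<lambda>i. M (x i)" n] by (simp add: sum.distrib)
  finally have "F a - F b \<le> M b - M a + e' * (b - a)"
    using n0 by (simp add: x_def)
  moreover have "e' * (b - a) \<le> e"
    using e ab by (simp add: e'_def field_simps)
  ultimately show "F a - F b \<le> M b - M a + e" by linarith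
qed

lemma continuous_on_cube_near_diagonal_less:
  fixes k :: "real \<times> real \<times> real \<Rightarrow> real"
  assumes cont: "continuous_on ({a..b} \<times> {a..b} \<times> {a..b}) k"
    and diag: "\<And>s. s \<in> {a..b} \<Longrightarrow> k (s, s, s) \<le> 0" and e: "e > 0"
  obtains \<delta> where "\<delta> > 0" and "\<And>x y s. x \<in> {a..b} \<Longrightarrow> y \<in> {a..b} \<Longrightarrow> s \<in> {a..b}
      \<Longrightarrow> dist x s < \<delta> \<Longrightarrow> dist y s < \<delta> \<Longrightarrow> k (x, y, s) < e"
proof -
  have "uniformly_continuous_on ({a..b} \<times> {a..b} \<times> {a..b}) k"
    using cont by (intro compact_uniformly_continuous compact_Times) auto
  then obtain \<delta> where \<delta>: "\<delta> > 0" and uc: "\<And>p q. p \<in> {a..b} \<times> {a..b} \<times> {a..b} \<Longrightarrow>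
      q \<in> {a..b} \<times> {a..b} \<times> {a..b} \<Longrightarrow> dist q p < \<delta> \<Longrightarrow> dist (k q) (k p) < e"
    using e unfolding uniformly_continuous_on_def by metis
  show ?thesis
  proof
    show "\<delta> / 2 > 0" using \<delta> by simp
    fix x y s assume in_ab: "x \<in> {a..b}" "y \<in> {a..b}" "s \<in> {a..b}"
      and near: "dist x s < \<delta> / 2" "dist y s < \<delta> / 2"
    have "dist (x, y, s) (s, s, s) = sqrt ((dist x s)\<^sup>2 + (dist y s)\<^sup>2)"
      by (simp add: dist_Pair_Pair)
    also have "\<dots> \<le> dist x s + dist y s"
      by (rule real_le_lsqrt) (auto simp: power2_eq_square algebra_simps)
    finally have "dist (x, y, s) (s, s, s) < \<delta>" using near by linarith
    then have "dist (k (x, y, s)) (k (s, s, s)) < e"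
      using in_ab by (intro uc) auto
    then show "k (x, y, s) < e"
      using diag[OF in_ab(3)] by (simp add: dist_real_def)
  qed
qed

text \<open>
  A substitute for \<open>F' \<ge> -m\<close> when \<open>F\<close> is not known to be differentiable: it suffices
  that every increment of \<open>F\<close> is controlled by \<open>m\<close> up to an error term \<open>k\<close> that
  is continuous in the endpoints and nonpositive on the diagonal.
\<close>
lemma increment_le_integral_of_local_bound:
  fixes F m :: "real \<Rightarrow> real" and k :: "real \<times> real \<times> real \<Rightarrow> real"
  assumes ab: "a \<le> b" and m: "m integrable_on {a..b}"
    and k: "continuous_on ({a..b} \<times> {a..b} \<times> {a..b}) k"
    and diag: "\<And>s. s \<in> {a..b} \<Longrightarrow> k (s, s, s) \<le> 0"
    and local: "\<And>x y. a \<le> x \<Longrightarrow> x \<le> y \<Longrightarrow> y \<le> b \<Longrightarrow>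
      F x - F y \<le> integral {x..y} m + integral {x..y} (\<lambda>s. k (x, y, s))"
  shows "F a - F b \<le> integral {a..b} m"
proof -
  have "F a - F b \<le> integral {a..b} m - integral {a..a} m"
  proof (rule increment_le_of_local_increment_le[OF ab])
    fix e :: real assume "e > 0"
    then obtain \<delta> where \<delta>: "\<delta> > 0" and near: "\<And>x y s. x \<in> {a..b} \<Longrightarrow> y \<in> {a..b} \<Longrightarrow> s \<in> {a..b}
      \<Longrightarrow> dist x s < \<delta> \<Longrightarrow> dist y s < \<delta> \<Longrightarrow> k (x, y, s) < e"
      using continuous_on_cube_near_diagonal_less[OF k diag] by blast
    show "\<exists>\<delta>>0. \<forall>x y. a \<le> x \<longrightarrow> x \<le> y \<longrightarrow> y \<le> b \<longrightarrow> y - x < \<delta>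
                 \<longrightarrow> F x - F y \<le> integral {a..y} m - integral {a..x} m + e * (y - x)"
    proof (intro exI[of _ \<delta>] conjI allI impI \<delta>)
      fix x y assume xy: "a \<le> x" "x \<le> y" "y \<le> b" "y - x < \<delta>"
      have "continuous_on {x..y} (\<lambda>s. k (x, y, s))"
        using xy by (intro continuous_on_compose2[OF k] continuous_intros) auto
      then have "integral {x..y} (\<lambda>s. k (x, y, s)) \<le> integral {x..y} (\<lambda>s. e)"
        using xy near by (intro integral_le integrable_continuous_interval) (auto simp: dist_real_def less_imp_le)
      moreover have "integral {a..x} m + integral {x..y} m = integral {a..y} m"
        using xy by (intro Henstock_Kurzweil_Integration.integral_combine
            integrable_subinterval_real[OF m]) auto
      ultimately show "F x - F y \<le> integral {a..y} m - integral {a..x} m + e * (y - x)"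
        using local[OF xy(1-3)] xy by (simp add: mult.commute)
    qed
  qed
  then show ?thesis by simp
qed

section \<open>A weighted energy estimate\<close>

lemma norm_sq_weighted_increment_le:
  fixes u u' :: "real \<Rightarrow> 'a::banach" and g g' w :: "real \<Rightarrow> real"
  assumes xy: "x \<le> y"
    and u: "(u' has_integral (u y - u x)) {x..y}"
    and g: "(g' has_integral (g y - g x)) {x..y}"
    and w: "continuous_on {x..y} w" "\<And>s. s \<in> {x..y} \<Longrightarrow> w s > 0"
    and du: "(\<lambda>s. (norm (u' s))\<^sup>2 * w s) integrable_on {x..y}"
    and \<epsilon>: "\<epsilon> > 0" and gx: "0 \<le> g x"
  shows "(norm (u x))\<^sup>2 * g x - (norm (u y))\<^sup>2 * g y
     \<le> \<epsilon> * integral {x..y} (\<lambda>s. (norm (u' s))\<^sup>2 * w s)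
       + integral {x..y} (\<lambda>s. ((norm (u x) + norm (u y)) * g x)\<^sup>2 / (4 * \<epsilon> * w s) - (norm (u y))\<^sup>2 * g' s)"
proof -
  define c where "c = (norm (u x) + norm (u y)) * g x"
  have c: "0 \<le> c" using gx by (simp add: c_def)
  have amgm: "c * v \<le> W * v\<^sup>2 + c\<^sup>2 / (4 * W)" if "W > 0" for W v :: real
  proof -
    have "0 \<le> (2 * W * v - c)\<^sup>2" by simp
    then have "4 * W * (c * v) \<le> 4 * W * (W * v\<^sup>2 + c\<^sup>2 / (4 * W))"
      using that by (simp add: power2_eq_square algebra_simps)
    then show ?thesis using that by simp
  qed
  define h where "h s = \<epsilon> * ((norm (u' s))\<^sup>2 * w s) + c\<^sup>2 / (4 * \<epsilon> * w s)" for s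
  have inv_w: "(\<lambda>s. c\<^sup>2 / (4 * \<epsilon> * w s)) integrable_on {x..y}"
    using w \<epsilon> by (intro integrable_continuous_interval continuous_intros) force+
  have h: "h integrable_on {x..y}"
    unfolding h_def using integrable_on_mult_right[OF du] inv_w by (rule integrable_add)
  have "((norm (u x))\<^sup>2 - (norm (u y))\<^sup>2) * g x
      = (norm (u x) - norm (u y)) * c"
    by (simp add: c_def power2_eq_square algebra_simps)
  also have "\<dots> \<le> norm (u y - u x) * c"
    using c by (intro mult_right_mono) (auto simp: norm_minus_commute norm_triangle_ineq2)
  also have "\<dots> = norm (integral {x..y} (\<lambda>s. c *\<^sub>R u' s))"
    using c integral_unique[OF u] by simp
  also have "\<dots> \<le> integral {x..y} h"
  proof (rule integral_norm_bound_integral[OF _ h])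
    show "(\<lambda>s. c *\<^sub>R u' s) integrable_on {x..y}"
      using has_integral_cmul[OF u] by blast
    fix s assume "s \<in> {x..y}"
    then have W: "\<epsilon> * w s > 0" using w \<epsilon> by simp
    show "norm (c *\<^sub>R u' s) \<le> h s"
      using amgm[OF W, of "norm (u' s)"] c by (simp add: h_def algebra_simps)
  qed
  finally have energy: "((norm (u x))\<^sup>2 - (norm (u y))\<^sup>2) * g x \<le> integral {x..y} h" .
  have "(norm (u x))\<^sup>2 * g x - (norm (u y))\<^sup>2 * g y
      = ((norm (u x))\<^sup>2 - (norm (u y))\<^sup>2) * g x - (norm (u y))\<^sup>2 * integral {x..y} g'"
    unfolding integral_unique[OF g] by (simp add: algebra_simps)
  also have "\<dots> \<le> integral {x..y} h - integral {x..y} (\<lambda>s. (norm (u y))\<^sup>2 * g' s)"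
    using energy by simp
  also have "\<dots> = \<epsilon> * integral {x..y} (\<lambda>s. (norm (u' s))\<^sup>2 * w s)
       + integral {x..y} (\<lambda>s. c\<^sup>2 / (4 * \<epsilon> * w s) - (norm (u y))\<^sup>2 * g' s)"
    using du inv_w g unfolding h_def
    by (auto simp: integral_add integral_diff integrable_on_mult_right integral_mult_right has_integral_integrable)
  finally show ?thesis unfolding c_def .
qed

lemma continuous_on_cube_energy_defect:
  fixes v g g' w :: "real \<Rightarrow> real"
  assumes "continuous_on {a..b} v" "continuous_on {a..b} g" "continuous_on {a..b} g'"
    "continuous_on {a..b} w" and "\<And>s. s \<in> {a..b} \<Longrightarrow> w s \<noteq> 0" and "\<epsilon> \<noteq> 0"
  shows "continuous_on ({a..b} \<times> {a..b} \<times> {a..b}) (\<lambda>(x, y, s).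
    ((v x + v y) * g x)\<^sup>2 / (4 * \<epsilon> * w s) - (v y)\<^sup>2 * g' s - \<mu> * ((v s)\<^sup>2 * w s))"
proof -
  define C where "C = {a..b} \<times> {a..b} \<times> {a..b}"
  have on_cube: "continuous_on C (\<lambda>p. f (fst p)) \<and> continuous_on C (\<lambda>p. f (fst (snd p)))
      \<and> continuous_on C (\<lambda>p. f (snd (snd p)))" if "continuous_on {a..b} f" for f :: "real \<Rightarrow> real"
    by (intro conjI; rule continuous_on_compose2[OF that]; force simp: C_def intro!: continuous_intros)
  have "4 * \<epsilon> * w (snd (snd p)) \<noteq> 0" if "p \<in> C" for p
    using that assms(5,6) by (auto simp: C_def)
  then show ?thesis
    using on_cube[OF assms(1)] on_cube[OF assms(2)] on_cube[OF assms(3)] on_cube[OF assms(4)]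
    unfolding split_def C_def[symmetric] by (intro continuous_intros) auto
qed

lemma energy_defect_diagonal_nonpos:
  fixes v g g' w \<epsilon> \<mu> :: real
  assumes W: "\<epsilon> * w > 0" and weight: "g\<^sup>2 \<le> \<epsilon> * w * (\<mu> * w + g')"
  shows "((v + v) * g)\<^sup>2 / (4 * \<epsilon> * w) - v\<^sup>2 * g' - \<mu> * (v\<^sup>2 * w) \<le> 0"
proof -
  have "g\<^sup>2 / (\<epsilon> * w) \<le> \<mu> * w + g'"
    using weight W by (simp add: pos_divide_le_eq algebra_simps)
  then have "v\<^sup>2 * (g\<^sup>2 / (\<epsilon> * w)) \<le> v\<^sup>2 * (\<mu> * w + g')"
    by (rule mult_left_mono) simp
  moreover have "((v + v) * g)\<^sup>2 / (4 * \<epsilon> * w) = v\<^sup>2 * (g\<^sup>2 / (\<epsilon> * w))"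
    by (simp add: power2_eq_square field_simps)
  ultimately show ?thesis by (simp add: algebra_simps)
qed

lemma weighted_energy_decrease:
  fixes u u' :: "real \<Rightarrow> 'a::banach" and g g' w :: "real \<Rightarrow> real"
  assumes prim: "\<And>t. 0 \<le> t \<Longrightarrow> (u' has_integral (u t - u 0)) {0..t}"
    and du: "(\<lambda>s. (norm (u' s))\<^sup>2 * w s) integrable_on {0..}"
    and uu: "(\<lambda>s. (norm (u s))\<^sup>2 * w s) integrable_on {0..}"
    and w: "continuous_on {0..} w" "\<And>s. 0 \<le> s \<Longrightarrow> w s > 0"
    and g: "\<And>s. 0 \<le> s \<Longrightarrow> (g has_real_derivative g' s) (at s)" "continuous_on {0..} g'"
      "\<And>s. 0 \<le> s \<Longrightarrow> 0 \<le> g s"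
    and \<epsilon>: "\<epsilon> > 0"
    and weights: "\<And>s. 0 \<le> s \<Longrightarrow> (g s)\<^sup>2 \<le> \<epsilon> * w s * (\<mu> * w s + g' s)"
    and tT: "0 \<le> t" "t \<le> T"
  shows "(norm (u t))\<^sup>2 * g t - (norm (u T))\<^sup>2 * g T
    \<le> integral {t..T} (\<lambda>s. \<epsilon> * ((norm (u' s))\<^sup>2 * w s) + \<mu> * ((norm (u s))\<^sup>2 * w s))"
proof (rule increment_le_integral_of_local_bound[OF tT(2)])
  \<comment> \<open>the error term left by \<open>norm_sq_weighted_increment_le\<close>\<close>
  define k where "k = (\<lambda>(x, y, s). ((norm (u x) + norm (u y)) * g x)\<^sup>2 / (4 * \<epsilon> * w s)
      - (norm (u y))\<^sup>2 * g' s - \<mu> * ((norm (u s))\<^sup>2 * w s))"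
  have sub: "{x..y} \<subseteq> {0..}" if "t \<le> x" for x y using that tT by auto
  have cont_u: "continuous_on {x..y} (\<lambda>s. norm (u s))" if "t \<le> x" for x y
    using that tT by (intro continuous_on_norm continuous_on_subset[OF continuous_on_primitive[OF prim]]) auto
  have cont_g: "continuous_on {x..y} g" if "t \<le> x" for x y
    using that tT by (intro continuous_at_imp_continuous_on ballI DERIV_isCont[OF g(1)]) auto
  have cont_g': "continuous_on {x..y} g'" and cont_w: "continuous_on {x..y} w" if "t \<le> x" for x y
    using continuous_on_subset[OF g(2) sub[OF that]] continuous_on_subset[OF w(1) sub[OF that]] by auto
  have int: "f integrable_on {x..y}" if "f integrable_on {0..}" "t \<le> x" for f :: "real \<Rightarrow> real" and x y
    using integrable_on_subcbox[OF that(1), of x y] sub[OF that(2)] by simp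
  have du': "(\<lambda>s. \<epsilon> * ((norm (u' s))\<^sup>2 * w s)) integrable_on {x..y}"
    and uu': "(\<lambda>s. \<mu> * ((norm (u s))\<^sup>2 * w s)) integrable_on {x..y}" if "t \<le> x" for x y
    using integrable_on_mult_right[OF int[OF du that]] integrable_on_mult_right[OF int[OF uu that]] by auto
  show "(\<lambda>s. \<epsilon> * ((norm (u' s))\<^sup>2 * w s) + \<mu> * ((norm (u s))\<^sup>2 * w s)) integrable_on {t..T}"
    using du' uu' by (intro integrable_add) auto
  show "continuous_on ({t..T} \<times> {t..T} \<times> {t..T}) k"
    unfolding k_def using \<epsilon> w(2) tT
    by (intro continuous_on_cube_energy_defect cont_u cont_g cont_g' cont_w) (auto simp: less_imp_neq[symmetric])
  show "k (s, s, s) \<le> 0" if "s \<in> {t..T}" for s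
  proof -
    have s: "0 \<le> s" using that tT by simp
    have "\<epsilon> * w s > 0" using w(2)[OF s] \<epsilon> by simp
    from energy_defect_diagonal_nonpos[OF this weights[OF s]] show ?thesis by (simp add: k_def)
  qed
  show "(norm (u x))\<^sup>2 * g x - (norm (u y))\<^sup>2 * g y
    \<le> integral {x..y} (\<lambda>s. \<epsilon> * ((norm (u' s))\<^sup>2 * w s) + \<mu> * ((norm (u s))\<^sup>2 * w s))
     + integral {x..y} (\<lambda>s. k (x, y, s))" if xy: "t \<le> x" "x \<le> y" "y \<le> T" for x y
  proof -
    define c where "c = (norm (u x) + norm (u y)) * g x"
    have x: "0 \<le> x" using xy tT by simp
    have w_pos: "w s > 0" if "s \<in> {x..y}" for s using that x w(2) by simp
    have g_int: "(g' has_integral (g y - g x)) {x..y}"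
    proof (rule fundamental_theorem_of_calculus[OF xy(2)])
      fix s assume "s \<in> {x..y}"
      then show "(g has_vector_derivative g' s) (at s within {x..y})"
        using x g(1)[of s] by (auto simp: has_real_derivative_iff_has_vector_derivative[symmetric]
            intro: has_field_derivative_at_within)
    qed
    have A: "(\<lambda>s. c\<^sup>2 / (4 * \<epsilon> * w s) - (norm (u y))\<^sup>2 * g' s) integrable_on {x..y}"
      using cont_w[OF xy(1)] cont_g'[OF xy(1)] w_pos \<epsilon>
      by (intro integrable_continuous_interval continuous_intros) force+
    have "(norm (u x))\<^sup>2 * g x - (norm (u y))\<^sup>2 * g y
      \<le> \<epsilon> * integral {x..y} (\<lambda>s. (norm (u' s))\<^sup>2 * w s)
       + integral {x..y} (\<lambda>s. c\<^sup>2 / (4 * \<epsilon> * w s) - (norm (u y))\<^sup>2 * g' s)"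
      unfolding c_def
      using norm_sq_weighted_increment_le[OF xy(2) has_integral_primitive_subinterval[OF prim x xy(2)]
          g_int cont_w[OF xy(1)] w_pos int[OF du xy(1)] \<epsilon> g(3)[OF x]] .
    also have "\<dots> = integral {x..y} (\<lambda>s. \<epsilon> * ((norm (u' s))\<^sup>2 * w s) + \<mu> * ((norm (u s))\<^sup>2 * w s))
     + integral {x..y} (\<lambda>s. k (x, y, s))"
      using integral_add[OF du'[OF xy(1)] uu'[OF xy(1)]] integral_diff[OF A uu'[OF xy(1)]]
      by (simp add: k_def c_def)
    finally show ?thesis .
  qed
qed

lemma weighted_energy_bound:
  fixes u u' :: "real \<Rightarrow> 'a::banach" and g g' w :: "real \<Rightarrow> real"
  assumes prim: "\<And>t. 0 \<le> t \<Longrightarrow> (u' has_integral (u t - u 0)) {0..t}"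
    and du: "(\<lambda>s. (norm (u' s))\<^sup>2 * w s) integrable_on {0..}"
    and uu: "(\<lambda>s. (norm (u s))\<^sup>2 * w s) integrable_on {0..}"
    and w: "continuous_on {0..} w" "\<And>s. 0 \<le> s \<Longrightarrow> w s > 0"
    and g: "\<And>s. 0 \<le> s \<Longrightarrow> (g has_real_derivative g' s) (at s)" "continuous_on {0..} g'"
      "\<And>s. 0 \<le> s \<Longrightarrow> 0 \<le> g s" "\<And>s. 0 \<le> s \<Longrightarrow> g s \<le> w s"
    and \<epsilon>: "\<epsilon> > 0" and \<mu>: "\<mu> \<ge> 0"
    and weights: "\<And>s. 0 \<le> s \<Longrightarrow> (g s)\<^sup>2 \<le> \<epsilon> * w s * (\<mu> * w s + g' s)"
    and t: "0 \<le> t"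
  shows "(norm (u t))\<^sup>2 * g t
    \<le> \<epsilon> * integral {0..} (\<lambda>s. (norm (u' s))\<^sup>2 * w s) + \<mu> * integral {0..} (\<lambda>s. (norm (u s))\<^sup>2 * w s)"
proof (rule field_le_epsilon)
  fix \<eta> :: real assume "\<eta> > 0"
  define f1 where "f1 s = (norm (u' s))\<^sup>2 * w s" for s
  define f2 where "f2 s = (norm (u s))\<^sup>2 * w s" for s
  have f1: "f1 integrable_on {0..}" and f2: "f2 integrable_on {0..}"
    using du uu by (simp_all add: f1_def[abs_def] f2_def[abs_def])
  have nonneg: "0 \<le> f1 s" "0 \<le> f2 s" if "0 \<le> s" for s
    using w(2)[OF that] by (simp_all add: f1_def f2_def)
  obtain T where tT: "t \<le> T" and small: "f2 T < \<eta>"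
    using integrable_nonneg_exists_small_value[OF f2 nonneg(2) t \<open>\<eta> > 0\<close>] by blast
  have sub: "f integrable_on {t..T}" if "f integrable_on {0..}" for f :: "real \<Rightarrow> real"
    using integrable_on_subcbox[OF that, of t T] t by auto
  have le_total: "integral {t..T} f \<le> integral {0..} f"
    if "f integrable_on {0..}" "\<And>s. 0 \<le> s \<Longrightarrow> 0 \<le> f s" for f :: "real \<Rightarrow> real"
    using that sub[OF that(1)] t by (intro integral_subset_le) auto
  have "(norm (u t))\<^sup>2 * g t - (norm (u T))\<^sup>2 * g T \<le> integral {t..T} (\<lambda>s. \<epsilon> * f1 s + \<mu> * f2 s)"
    using weighted_energy_decrease[OF prim du uu w g(1-3) \<epsilon> weights t tT] by (simp add: f1_def f2_def)
  also have "\<dots> = \<epsilon> * integral {t..T} f1 + \<mu> * integral {t..T} f2"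
    using sub[OF f1] sub[OF f2] by (simp add: integral_add integrable_on_mult_right)
  also have "\<dots> \<le> \<epsilon> * integral {0..} f1 + \<mu> * integral {0..} f2"
    using le_total[OF f1 nonneg(1)] le_total[OF f2 nonneg(2)] \<epsilon> \<mu>
    by (intro add_mono mult_left_mono) auto
  finally have "(norm (u t))\<^sup>2 * g t \<le> \<epsilon> * integral {0..} f1 + \<mu> * integral {0..} f2 + (norm (u T))\<^sup>2 * g T"
    by simp
  moreover have "(norm (u T))\<^sup>2 * g T \<le> f2 T"
    using g(4)[of T] t tT by (simp add: f2_def mult_left_mono)
  ultimately show "(norm (u t))\<^sup>2 * g t \<le> \<epsilon> * integral {0..} (\<lambda>s. (norm (u' s))\<^sup>2 * w s)
      + \<mu> * integral {0..} (\<lambda>s. (norm (u s))\<^sup>2 * w s) + \<eta>"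
    using small by (simp add: f1_def[abs_def] f2_def[abs_def])
qed

section \<open>Power weights and the optimal constant\<close>

text \<open>The constant \<open>K\<close> of the theorem, written in terms of \<open>\<theta> = (d - 2\<beta>)/2\<close>.\<close>
definition interpolation_constant :: "real \<Rightarrow> real \<Rightarrow> real" where
  "interpolation_constant \<theta> \<beta> = powr0 (1 / \<theta>) (2 * \<theta>) * powr0 ((2 * \<theta> - 1) / (2 * \<beta>)) (2 * \<theta> - 1)"

lemma interpolation_constant_AM_GM:
  fixes \<theta> \<beta> y :: real
  defines "K \<equiv> interpolation_constant \<theta> \<beta>"
  assumes \<theta>: "1/2 \<le> \<theta>" "\<theta> \<le> 1" and \<beta>: "\<beta> > 0" and y: "y > 0"
  shows "1 \<le> \<theta> * K * ((1 - \<theta>) * K * y powr (2 * \<theta> - 1) + 2 * \<beta> * y powr (\<theta> - 1))"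
proof -
  consider "\<theta> = 1/2" | "\<theta> = 1" | "1/2 < \<theta>" "\<theta> < 1" using \<theta> by linarith
  then show ?thesis
  proof cases
    case 1
    then have "K = 2" unfolding K_def interpolation_constant_def powr0_def 1 by simp
    then show ?thesis unfolding 1 using \<beta> y by simp
  next
    case 2
    then have "K = 1 / (2 * \<beta>)"
      unfolding K_def interpolation_constant_def powr0_def 2 using \<beta> by simp
    then show ?thesis unfolding 2 using \<beta> y by simp
  next
    case 3
    \<comment> \<open>Weighted AM-GM with weights \<open>p\<close>, \<open>1 - p\<close>: the powers of \<open>y\<close> cancel, and \<open>K\<close> is
      exactly the constant making the geometric mean equal to 1.\<close>
    define q where "q = (2 * \<theta> - 1) / (2 * \<beta>)"
    define p where "p = (1 - \<theta>) / \<theta>"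
    have q: "q > 0" and p: "0 < p" "p < 1" using 3 \<beta> by (auto simp: q_def p_def field_simps)
    have K: "K = \<theta> powr (- 2 * \<theta>) * q powr (2 * \<theta> - 1)"
      using 3 by (simp add: K_def interpolation_constant_def powr0_def q_def powr_minus_divide powr_divide)
    have K_pos: "K > 0" using K q 3 by simp
    define U where "U = \<theta>\<^sup>2 * K\<^sup>2 * y powr (2 * \<theta> - 1)"
    define V where "V = \<theta>\<^sup>2 * K / q * y powr (\<theta> - 1)"
    have UV: "U > 0" "V > 0" using 3 K_pos q y by (simp_all add: U_def V_def)
    have "p * ln U + (1 - p) * ln V = 0"
    proof -
      have lnK: "ln K = - 2 * \<theta> * ln \<theta> + (2 * \<theta> - 1) * ln q"
        using 3 q by (simp add: K ln_mult ln_powr)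
      have lnU: "ln U = (2 - 4 * \<theta>) * ln \<theta> + (4 * \<theta> - 2) * ln q + (2 * \<theta> - 1) * ln y"
        using 3 K_pos y by (simp add: U_def ln_mult ln_powr ln_realpow lnK algebra_simps)
      have lnV: "ln V = (2 - 2 * \<theta>) * ln \<theta> + (2 * \<theta> - 2) * ln q + (\<theta> - 1) * ln y"
        using 3 K_pos q y by (simp add: V_def ln_mult ln_div ln_powr ln_realpow lnK algebra_simps)
      have "\<theta> * (p * ln U + (1 - p) * ln V) = (1 - \<theta>) * ln U + (2 * \<theta> - 1) * ln V"
        using 3 by (simp add: p_def field_simps)
      also have "\<dots> = 0"
        unfolding lnU lnV by (simp add: algebra_simps)
      finally show ?thesis using 3 by simp
    qed
    then have "1 = U powr p * V powr (1 - p)"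
      using UV by (simp add: powr_def exp_add[symmetric])
    also have "\<dots> \<le> p * U + (1 - p) * V"
      using UV p by (intro Youngs_inequality_0) auto
    also have "\<dots> = \<theta> * K * ((1 - \<theta>) * K * y powr (2 * \<theta> - 1) + 2 * \<beta> * y powr (\<theta> - 1))"
      using 3 \<beta> by (simp add: p_def q_def U_def V_def field_simps power2_eq_square)
    finally show ?thesis .
  qed
qed

lemma power_weights_condition:
  fixes d \<theta> \<beta> \<rho> x :: real
  defines "K \<equiv> interpolation_constant \<theta> \<beta>"
  assumes \<theta>: "1/2 \<le> \<theta>" "\<theta> \<le> 1" and \<beta>: "\<beta> > 0" and d: "d = 2 * \<theta> + 2 * \<beta>"
    and \<rho>: "\<rho> > 0" and x: "x > 0"
  shows "(x powr (2 * \<beta>))\<^sup>2 \<le> \<theta> * K * \<rho> powr (\<theta> - 1) * x powr (d - 1)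
    * ((1 - \<theta>) * K * \<rho> powr \<theta> * x powr (d - 1) + 2 * \<beta> * x powr (2 * \<beta> - 1))"
proof -
  define X where "X = (x powr (2 * \<beta>))\<^sup>2"
  have X: "X > 0" using x by (simp add: X_def)
  have scale: "(\<rho> * x\<^sup>2) powr a * X = \<rho> powr a * x powr (2 * a + 4 * \<beta>)" for a
    using \<rho> x by (simp add: X_def powr_mult powr_powr power2_eq_square powr_realpow[symmetric])
      (simp add: powr_add[symmetric] algebra_simps)
  have "X \<le> \<theta> * K * ((1 - \<theta>) * K * (\<rho> * x\<^sup>2) powr (2 * \<theta> - 1) + 2 * \<beta> * (\<rho> * x\<^sup>2) powr (\<theta> - 1)) * X"
    using interpolation_constant_AM_GM[OF \<theta> \<beta>, of "\<rho> * x\<^sup>2"] \<rho> x X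
    unfolding K_def by simp
  also have "\<dots> = \<theta> * K * ((1 - \<theta>) * K * ((\<rho> * x\<^sup>2) powr (2 * \<theta> - 1) * X) + 2 * \<beta> * ((\<rho> * x\<^sup>2) powr (\<theta> - 1) * X))"
    by (simp add: algebra_simps)
  also have "\<dots> = \<theta> * K * ((1 - \<theta>) * K * (\<rho> powr (2 * \<theta> - 1) * x powr (2 * (2 * \<theta> - 1) + 4 * \<beta>))
      + 2 * \<beta> * (\<rho> powr (\<theta> - 1) * x powr (2 * (\<theta> - 1) + 4 * \<beta>)))"
    by (simp only: scale)
  also have "\<dots> = \<theta> * K * \<rho> powr (\<theta> - 1) * x powr (d - 1)
    * ((1 - \<theta>) * K * \<rho> powr \<theta> * x powr (d - 1) + 2 * \<beta> * x powr (2 * \<beta> - 1))"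
  proof -
    have "\<rho> powr (2 * \<theta> - 1) = \<rho> powr (\<theta> - 1) * \<rho> powr \<theta>"
      "x powr (2 * (2 * \<theta> - 1) + 4 * \<beta>) = x powr (d - 1) * x powr (d - 1)"
      "x powr (2 * (\<theta> - 1) + 4 * \<beta>) = x powr (d - 1) * x powr (2 * \<beta> - 1)"
      unfolding d powr_add[symmetric] by (simp_all add: algebra_simps)
    then show ?thesis by (simp add: algebra_simps)
  qed
  finally show ?thesis unfolding X_def .
qed

lemma nonpos_of_le_powr_all:
  fixes F c p :: real
  assumes p: "p \<noteq> 0" and F: "\<And>\<rho>. \<rho> > 0 \<Longrightarrow> F \<le> c * \<rho> powr p"
  shows "F \<le> 0"
proof (rule ccontr)
  assume "\<not> F \<le> 0"
  then have F_pos: "F > 0" by simp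
  then have c: "c > 0" using F[of 1] by simp
  define \<rho> where "\<rho> = (F / (2 * c)) powr (1 / p)"
  have "\<rho> > 0" and "\<rho> powr p = F / (2 * c)"
    using F_pos c p by (simp_all add: \<rho>_def powr_powr)
  then have "F \<le> F / 2" using F[of \<rho>] c by simp
  then show False using F_pos by simp
qed

lemma le_interpolation_of_le_all_scales:
  fixes F A B K \<theta> :: real
  assumes \<theta>: "0 < \<theta>" "\<theta> \<le> 1" and A: "0 \<le> A" and B: "0 \<le> B"
    and F: "\<And>\<rho>. \<rho> > 0 \<Longrightarrow> F \<le> \<theta> * K * \<rho> powr (\<theta> - 1) * A + (1 - \<theta>) * K * \<rho> powr \<theta> * B"
  shows "F \<le> K * powr0 A \<theta> * powr0 B (1 - \<theta>)"
proof -
  consider "A = 0" | "A > 0" "B > 0" | "A > 0" "B = 0" "\<theta> = 1" | "A > 0" "B = 0" "\<theta> < 1"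
    using A B \<theta> by linarith
  then show ?thesis
  proof cases
    case 1
    then have "F \<le> 0" using \<theta> F by (intro nonpos_of_le_powr_all[of \<theta> F "(1 - \<theta>) * K * B"]) (simp_all add: mult_ac)
    then show ?thesis using 1 \<theta> by (simp add: powr0_def)
  next
    case 2
    have "F \<le> \<theta> * K * (A / B) powr (\<theta> - 1) * A + (1 - \<theta>) * K * (A / B) powr \<theta> * B"
      using F 2 by simp
    also have "\<dots> = K * A powr \<theta> * B powr (1 - \<theta>)"
      using 2 by (simp add: powr_divide powr_diff field_simps)
    finally show ?thesis using \<theta> 2 by (auto simp: powr0_def)
  next
    case 3
    then show ?thesis using F[of 1] by (simp add: powr0_def)
  next
    case 4
    then have "F \<le> 0" using \<theta> F by (intro nonpos_of_le_powr_all[of "\<theta> - 1" F "\<theta> * K * A"]) (simp_all add: mult_ac)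
    then show ?thesis using 4 \<theta> by (simp add: powr0_def)
  qed
qed

lemma power_weighted_energy_bound:
  fixes u u' :: "real \<Rightarrow> 'a::banach" and d \<theta> \<beta> \<rho> t :: real
  defines "K \<equiv> interpolation_constant \<theta> \<beta>"
  assumes \<theta>: "1/2 \<le> \<theta>" "\<theta> \<le> 1" and \<beta>: "\<beta> > 0" and d: "d = 2 * \<theta> + 2 * \<beta>" and \<rho>: "\<rho> > 0"
    and prim: "\<And>t. 0 \<le> t \<Longrightarrow> (u' has_integral (u t - u 0)) {0..t}"
    and du: "(\<lambda>t. (norm (u' t))\<^sup>2 * (1 + t) powr (d - 1)) integrable_on {0..}"
    and uu: "(\<lambda>t. (norm (u t))\<^sup>2 * (1 + t) powr (d - 1)) integrable_on {0..}"
    and t: "0 \<le> t"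
  shows "(norm (u t))\<^sup>2 * (1 + t) powr (2 * \<beta>)
    \<le> \<theta> * K * \<rho> powr (\<theta> - 1) * integral {0..} (\<lambda>t. (norm (u' t))\<^sup>2 * (1 + t) powr (d - 1))
      + (1 - \<theta>) * K * \<rho> powr \<theta> * integral {0..} (\<lambda>t. (norm (u t))\<^sup>2 * (1 + t) powr (d - 1))"
proof (rule weighted_energy_bound[where g = "\<lambda>s. (1 + s) powr (2 * \<beta>)"
      and g' = "\<lambda>s. 2 * \<beta> * (1 + s) powr (2 * \<beta> - 1)" and w = "\<lambda>s. (1 + s) powr (d - 1)",
      OF prim du uu _ _ _ _ _ _ _ _ _ t])
  show "continuous_on {0..} (\<lambda>s. (1 + s) powr (d - 1))"
    and "continuous_on {0..} (\<lambda>s. 2 * \<beta> * (1 + s) powr (2 * \<beta> - 1))"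
    by (intro continuous_intros; simp add: add_pos_nonneg)+
  have "K > 0" using \<theta> \<beta> by (simp add: K_def interpolation_constant_def powr0_def)
  then show "\<theta> * K * \<rho> powr (\<theta> - 1) > 0" "(1 - \<theta>) * K * \<rho> powr \<theta> \<ge> 0"
    using \<theta> \<rho> by simp_all
  fix s :: real assume s: "0 \<le> s"
  show "(1 + s) powr (d - 1) > 0" "(1 + s) powr (2 * \<beta>) \<ge> 0"
    using s by simp_all
  show "((\<lambda>s. (1 + s) powr (2 * \<beta>)) has_real_derivative 2 * \<beta> * (1 + s) powr (2 * \<beta> - 1)) (at s)"
    using s by (auto intro!: derivative_eq_intros)
  show "(1 + s) powr (2 * \<beta>) \<le> (1 + s) powr (d - 1)"
    using s d \<theta> by (intro powr_mono) auto
  show "((1 + s) powr (2 * \<beta>))\<^sup>2 \<le> \<theta> * K * \<rho> powr (\<theta> - 1) * (1 + s) powr (d - 1)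
      * ((1 - \<theta>) * K * \<rho> powr \<theta> * (1 + s) powr (d - 1) + 2 * \<beta> * (1 + s) powr (2 * \<beta> - 1))"
    using power_weights_condition[OF \<theta> \<beta> d \<rho>, of "1 + s"] s unfolding K_def by simp
qed

theorem lemma6p4:
  fixes d \<beta> :: real and u u' :: "real \<Rightarrow> complex"
  assumes params: "(1 < d \<and> d \<le> 2 \<and> 0 < \<beta> \<and> \<beta> \<le> (d - 1) / 2)
                 \<or> (d > 2 \<and> (d - 2) / 2 \<le> \<beta> \<and> \<beta> \<le> (d - 1) / 2)"
    and H1loc: "\<And>t. 0 \<le> t \<Longrightarrow> (u' has_integral (u t - u 0)) {0..t}"
    and du: "(\<lambda>t. (norm (u' t))\<^sup>2 * (1 + t) powr (d - 1)) integrable_on {0..}"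
    and uu: "(\<lambda>t. (norm (u t))\<^sup>2 * (1 + t) powr (d - 1)) integrable_on {0..}"
  shows "\<forall>t\<ge>0. (norm (u t))\<^sup>2 * (1 + t) powr (2 * \<beta>)
           \<le> (let \<theta> = (d - 2 * \<beta>) / 2;
                   K = powr0 (2 / (d - 2 * \<beta>)) (d - 2 * \<beta>)
                       * powr0 ((d - 1 - 2 * \<beta>) / (2 * \<beta>)) (d - 1 - 2 * \<beta>)
               in K * powr0 (integral {0..} (\<lambda>t. (norm (u' t))\<^sup>2 * (1 + t) powr (d - 1))) \<theta>
                    * powr0 (integral {0..} (\<lambda>t. (norm (u t))\<^sup>2 * (1 + t) powr (d - 1))) (1 - \<theta>))"
proof -
  define \<theta> where "\<theta> = (d - 2 * \<beta>) / 2"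
  define A where "A = integral {0..} (\<lambda>t. (norm (u' t))\<^sup>2 * (1 + t) powr (d - 1))"
  define B where "B = integral {0..} (\<lambda>t. (norm (u t))\<^sup>2 * (1 + t) powr (d - 1))"
  have \<beta>: "\<beta> > 0" and \<theta>: "1/2 \<le> \<theta>" "\<theta> \<le> 1"
    using params by (auto simp: \<theta>_def)
  have d: "d = 2 * \<theta> + 2 * \<beta>" unfolding \<theta>_def by (simp add: field_simps)
  have AB: "0 \<le> A" "0 \<le> B"
    using du uu unfolding A_def B_def by (intro integral_nonneg; simp)+
  have "(norm (u t))\<^sup>2 * (1 + t) powr (2 * \<beta>) \<le> interpolation_constant \<theta> \<beta> * powr0 A \<theta> * powr0 B (1 - \<theta>)"
    if t: "0 \<le> t" for t
  proof (rule le_interpolation_of_le_all_scales[OF _ \<theta>(2) AB])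
    show "0 < \<theta>" using \<theta> by simp
    fix \<rho> :: real assume "\<rho> > 0"
    then show "(norm (u t))\<^sup>2 * (1 + t) powr (2 * \<beta>) \<le> \<theta> * interpolation_constant \<theta> \<beta> * \<rho> powr (\<theta> - 1) * A
        + (1 - \<theta>) * interpolation_constant \<theta> \<beta> * \<rho> powr \<theta> * B"
      unfolding A_def B_def by (rule power_weighted_energy_bound[OF \<theta> \<beta> d _ H1loc du uu t])
  qed
  moreover have "powr0 (2 / (d - 2 * \<beta>)) (d - 2 * \<beta>) * powr0 ((d - 1 - 2 * \<beta>) / (2 * \<beta>)) (d - 1 - 2 * \<beta>)
      = interpolation_constant \<theta> \<beta>"
    unfolding interpolation_constant_def d by simp
  ultimately show ?thesis
    unfolding Let_def \<theta>_def[symmetric] A_def[symmetric] B_def[symmetric] by simp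
qed

end
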